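(* Assume $f_1,f_0$ are $\ell_1$-Lipschitz with constants $L_1,L_0$, and suppose the AA2 policy is applied at all times (in discrete time). If $$L_{AA2}:=\max_{0\le\Delta\le\pi\le1}\Big(2[\pi L_1+(1-\pi)L_0]+|f_1(\Delta,\pi-\Delta)-f_0(\Delta,\pi-\Delta)|\Big)<1,$$ then $|f_A(\pi,\pi')-f_B(\pi,\pi')|\le L_{AA2}|\pi-\pi'|$ for all $\pi,\pi'\in[0,1]$, and hence $|\pi_t(1|A)-\pi_t(1|B)|\to0$ for all initial profiles (society equalizes).
   Context: Two groups $A,B$; $\neg j$ is the group other than $j$. At time $t$ group $j$ has qualification profile $\pi_t(1|j)\in[0,1]$, $\pi_t(0|j)=1-\pi_t(1|j)$. Selection rates of a policy $\tau$: $\beta_t(v;j)=\tau(v;j)\pi_t(v|j)$. Dynamics: continuously differentiable $f_0,f_1:[0,1]^2\to[0,1]$, discrete time update $\pi_{t+1}(1|j)=\pi_t(1|j)f_1(\beta_t(0;j),\beta_t(1;j))+(1-\pi_t(1|j))f_0(\beta_t(0;j),\beta_t(1;j))$. "$\ell_1$-Lipschitz with constant $L_i$": $|f_i(x_1,x_2)-f_i(y_1,y_2)|\le L_i(|x_1-y_1|+|x_2-y_2|)$. Group $j$ is advantaged at time $t$ if $\pi_t(1|j)\ge\pi_t(1|\neg j)$. The AA2 policy with respect to advantaged $j$ is $\tau(1;j)=\tau(1;\neg j)=1$, $\tau(0;j)=0$, $\tau(0;\neg j)=(\pi_t(1|j)-\pi_t(1|\neg j))/(1-\pi_t(1|\neg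 j))$, i.e. selection rates $\beta_t(0;j)=0$, $\beta_t(1;j)=\pi_t(1|j)$, $\beta_t(0;\neg j)=\pi_t(1|j)-\pi_t(1|\neg j)$, $\beta_t(1;\neg j)=\pi_t(1|\neg j)$ (defined through these rates if a denominator vanishes). "Applying AA2 at all times" means at every $t$ AA2 is used with respect to the group advantaged at time $t$. With $\pi=\pi_t(1|A)$, $\pi'=\pi_t(1|B)$, the joint update is $\pi_{t+1}(1|A)=f_A(\pi,\pi')$, $\pi_{t+1}(1|B)=f_B(\pi,\pi')$. *)

theory Defs
  imports "HOL-Analysis.Analysis"
begin

definition unit_sq :: "(real \<times> real) set" where
  "unit_sq = {0..1} \<times> {0..1}"

definition C1_on_square :: "(real \<Rightarrow> real \<Rightarrow> real) \<Rightarrow> bool" where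
  "C1_on_square f \<longleftrightarrow> (\<exists>D :: real \<times> real \<Rightarrow> (real \<times> real) \<Rightarrow>\<^sub>L real.
      (\<forall>z\<in>unit_sq. ((\<lambda>(x, y). f x y) has_derivative blinfun_apply (D z)) (at z within unit_sq))
      \<and> continuous_on unit_sq D)"

definition l1_lipschitz :: "(real \<Rightarrow> real \<Rightarrow> real) \<Rightarrow> real \<Rightarrow> bool" where
  "l1_lipschitz f L \<longleftrightarrow> (\<forall>x1 x2 y1 y2. x1 \<in> {0..1} \<longrightarrow> x2 \<in> {0..1} \<longrightarrow> y1 \<in> {0..1} \<longrightarrow> y2 \<in> {0..1}
      \<longrightarrow> \<bar>f x1 x2 - f y1 y2\<bar> \<le> L * (\<bar>x1 - y1\<bar> + \<bar>x2 - y2\<bar>))"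

text \<open>One-step update of a group's qualification profile p given selection rates b0 = beta(0), b1 = beta(1).\<close>
definition upd :: "(real \<Rightarrow> real \<Rightarrow> real) \<Rightarrow> (real \<Rightarrow> real \<Rightarrow> real) \<Rightarrow> real \<Rightarrow> real \<Rightarrow> real \<Rightarrow> real" where
  "upd f0 f1 p b0 b1 = p * f1 b0 b1 + (1 - p) * f0 b0 b1"

text \<open>AA2 selection rates for a group with profile p when the other group has profile q:
  if advantaged (p \<ge> q): beta(0) = 0, beta(1) = p; otherwise beta(0) = q - p, beta(1) = p.
  (At p = q both readings coincide.)\<close>
definition AA2_update :: "(real \<Rightarrow> real \<Rightarrow> real) \<Rightarrow> (real \<Rightarrow> real \<Rightarrow> real) \<Rightarrow> real \<Rightarrow> real \<Rightarrow> real" where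
  "AA2_update f0 f1 p q = (if q \<le> p then upd f0 f1 p 0 p else upd f0 f1 p (q - p) p)"

definition fA_AA2 :: "(real \<Rightarrow> real \<Rightarrow> real) \<Rightarrow> (real \<Rightarrow> real \<Rightarrow> real) \<Rightarrow> real \<Rightarrow> real \<Rightarrow> real" where
  "fA_AA2 f0 f1 \<pi> \<pi>' = AA2_update f0 f1 \<pi> \<pi>'"

definition fB_AA2 :: "(real \<Rightarrow> real \<Rightarrow> real) \<Rightarrow> (real \<Rightarrow> real \<Rightarrow> real) \<Rightarrow> real \<Rightarrow> real \<Rightarrow> real" where
  "fB_AA2 f0 f1 \<pi> \<pi>' = AA2_update f0 f1 \<pi>' \<pi>"

text \<open>The constant L_AA2 = max over 0 \<le> Delta \<le> pi \<le> 1 of the given expression (a maximum of a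
  continuous function on a compact set, written as Sup).\<close>
definition L_AA2 :: "(real \<Rightarrow> real \<Rightarrow> real) \<Rightarrow> (real \<Rightarrow> real \<Rightarrow> real) \<Rightarrow> real \<Rightarrow> real \<Rightarrow> real" where
  "L_AA2 f0 f1 L0 L1 = Sup {2 * (\<pi> * L1 + (1 - \<pi>) * L0) + \<bar>f1 \<Delta> (\<pi> - \<Delta>) - f0 \<Delta> (\<pi> - \<Delta>)\<bar>
                             | \<Delta> \<pi>. 0 \<le> \<Delta> \<and> \<Delta> \<le> \<pi> \<and> \<pi> \<le> 1}"

end

theory Submission
  imports Defs
begin

text \<open>If group \<open>A\<close> is advantaged, \<open>\<pi> \<ge> \<pi>'\<close>, put \<open>\<Delta> = \<pi> - \<pi>'\<close>. Under AA2 group \<open>A\<close> is updated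
  with selection rates \<open>(0, \<pi>)\<close> and group \<open>B\<close> with \<open>(\<Delta>, \<pi> - \<Delta>)\<close>, so the two new profiles differ by
  \<open>\<pi> (f\<^sub>1(0,\<pi>) - f\<^sub>1(\<Delta>,\<pi>-\<Delta>)) + (1-\<pi>) (f\<^sub>0(0,\<pi>) - f\<^sub>0(\<Delta>,\<pi>-\<Delta>)) + \<Delta> (f\<^sub>1 - f\<^sub>0)(\<Delta>,\<pi>-\<Delta>)\<close>.
  The rates differ by \<open>2\<Delta>\<close> in \<open>\<ell>\<^sub>1\<close>, so the Lipschitz bounds give a gap of at most
  \<open>\<Delta> \<cdot> L\<^sub>A\<^sub>A\<^sub>2\<close>. A contraction of the gap with factor \<open>L\<^sub>A\<^sub>A\<^sub>2 < 1\<close> makes it decay geometrically.\<close>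

lemma nonneg_contraction_tendsto_zero:
  fixes x :: "nat \<Rightarrow> real"
  assumes nonneg: "\<And>t. 0 \<le> x t" and step: "\<And>t. x (Suc t) \<le> L * x t" and "L < 1"
  shows "x \<longlonglongrightarrow> 0"
proof -
  define c where "c = max L 0"
  have c: "0 \<le> c" "c < 1" using \<open>L < 1\<close> by (auto simp: c_def)
  have bound: "x t \<le> c ^ t * x 0" for t
  proof (induction t)
    case (Suc t)
    have "x (Suc t) \<le> c * x t"
      using step[of t] nonneg[of t] mult_right_mono[of L c "x t"] by (simp add: c_def)
    also have "\<dots> \<le> c * (c ^ t * x 0)" using Suc c by (intro mult_left_mono)
    finally show ?case by simp
  qed simp
  have "(\<lambda>t. c ^ t * x 0) \<longlonglongrightarrow> 0"
    using LIMSEQ_power_zero[of c] c by (intro tendsto_mult_left_zero) auto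
  then show ?thesis
    using tendsto_sandwich[of "\<lambda>_. 0" x sequentially "\<lambda>t. c ^ t * x 0" 0] nonneg bound
    by auto
qed

lemma upd_in_unit:
  assumes "f0 b0 b1 \<in> {0..1}" "f1 b0 b1 \<in> {0..1}" "p \<in> {0..1}"
  shows "upd f0 f1 p b0 b1 \<in> {0..1}"
  using assms convex_bound_le[of "f1 b0 b1" 1 "f0 b0 b1" p "1 - p"] by (simp add: upd_def)

lemma AA2_update_in_unit:
  assumes range0: "\<And>x y. x \<in> {0..1} \<Longrightarrow> y \<in> {0..1} \<Longrightarrow> f0 x y \<in> {0..1}"
    and range1: "\<And>x y. x \<in> {0..1} \<Longrightarrow> y \<in> {0..1} \<Longrightarrow> f1 x y \<in> {0..1}"
    and "p \<in> {0..1}" "q \<in> {0..1}"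
  shows "AA2_update f0 f1 p q \<in> {0..1}"
  using assms upd_in_unit[of f0 0 p f1] upd_in_unit[of f0 "q - p" p f1]
  by (auto simp: AA2_update_def)

lemma L_AA2_upper:
  assumes range0: "\<And>x y. x \<in> {0..1} \<Longrightarrow> y \<in> {0..1} \<Longrightarrow> f0 x y \<in> {0..1}"
    and range1: "\<And>x y. x \<in> {0..1} \<Longrightarrow> y \<in> {0..1} \<Longrightarrow> f1 x y \<in> {0..1}"
    and "0 \<le> \<Delta>" "\<Delta> \<le> \<pi>" "\<pi> \<le> 1"
  shows "2 * (\<pi> * L1 + (1 - \<pi>) * L0) + \<bar>f1 \<Delta> (\<pi> - \<Delta>) - f0 \<Delta> (\<pi> - \<Delta>)\<bar> \<le> L_AA2 f0 f1 L0 L1"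
  unfolding L_AA2_def
proof (rule cSup_upper)
  show "bdd_above {2 * (\<pi> * L1 + (1 - \<pi>) * L0) + \<bar>f1 \<Delta> (\<pi> - \<Delta>) - f0 \<Delta> (\<pi> - \<Delta>)\<bar>
                    | \<Delta> \<pi>. 0 \<le> \<Delta> \<and> \<Delta> \<le> \<pi> \<and> \<pi> \<le> 1}"
  proof (rule bdd_aboveI, safe)
    fix D P :: real assume "0 \<le> D" "D \<le> P" "P \<le> 1"
    then have "\<bar>f1 D (P - D) - f0 D (P - D)\<bar> \<le> 1"
      using range0[of D "P - D"] range1[of D "P - D"] by auto
    moreover have "P * L1 + (1 - P) * L0 \<le> max L1 L0"
      using \<open>0 \<le> D\<close> \<open>D \<le> P\<close> \<open>P \<le> 1\<close> by (intro convex_bound_le) auto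
    ultimately show "2 * (P * L1 + (1 - P) * L0) + \<bar>f1 D (P - D) - f0 D (P - D)\<bar> \<le> 2 * max L1 L0 + 1"
      by (intro add_mono) auto
  qed
qed (use assms in auto)

lemma l1_lipschitzD:
  assumes "l1_lipschitz f L" "x1 \<in> {0..1}" "x2 \<in> {0..1}" "y1 \<in> {0..1}" "y2 \<in> {0..1}"
  shows "\<bar>f x1 x2 - f y1 y2\<bar> \<le> L * (\<bar>x1 - y1\<bar> + \<bar>x2 - y2\<bar>)"
  using assms unfolding l1_lipschitz_def by blast

lemma upd_AA2_gap:
  assumes range0: "\<And>x y. x \<in> {0..1} \<Longrightarrow> y \<in> {0..1} \<Longrightarrow> f0 x y \<in> {0..1}"
    and range1: "\<And>x y. x \<in> {0..1} \<Longrightarrow> y \<in> {0..1} \<Longrightarrow> f1 x y \<in> {0..1}"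
    and lip0: "l1_lipschitz f0 L0" and lip1: "l1_lipschitz f1 L1"
    and "0 \<le> q" "q \<le> p" "p \<le> 1"
  shows "\<bar>upd f0 f1 p 0 p - upd f0 f1 q (p - q) q\<bar> \<le> L_AA2 f0 f1 L0 L1 * (p - q)"
proof -
  define d where "d = p - q"
  have d: "0 \<le> d" "d \<le> p" "q = p - d" using assms by (auto simp: d_def)
  have lip1_step: "\<bar>f1 0 p - f1 d q\<bar> \<le> L1 * (2 * d)"
    using l1_lipschitzD[OF lip1, of 0 p d q] assms d by simp
  have lip0_step: "\<bar>f0 0 p - f0 d q\<bar> \<le> L0 * (2 * d)"
    using l1_lipschitzD[OF lip0, of 0 p d q] assms d by simp
  have "upd f0 f1 p 0 p - upd f0 f1 q d q
      = p * (f1 0 p - f1 d q) + (1 - p) * (f0 0 p - f0 d q) + d * (f1 d q - f0 d q)"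
    unfolding upd_def d(3) by (simp add: algebra_simps)
  then have "\<bar>upd f0 f1 p 0 p - upd f0 f1 q d q\<bar>
      \<le> \<bar>p * (f1 0 p - f1 d q)\<bar> + \<bar>(1 - p) * (f0 0 p - f0 d q)\<bar> + \<bar>d * (f1 d q - f0 d q)\<bar>"
    by (simp only: abs_triangle_ineq add_right_mono order_trans[OF abs_triangle_ineq])
  also have "\<dots> = p * \<bar>f1 0 p - f1 d q\<bar> + (1 - p) * \<bar>f0 0 p - f0 d q\<bar> + d * \<bar>f1 d q - f0 d q\<bar>"
    using assms d by (simp add: abs_mult)
  also have "\<dots> \<le> p * (L1 * (2 * d)) + (1 - p) * (L0 * (2 * d)) + d * \<bar>f1 d q - f0 d q\<bar>"
    using lip1_step lip0_step assms d by (intro add_mono mult_left_mono) auto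
  also have "\<dots> = d * (2 * (p * L1 + (1 - p) * L0) + \<bar>f1 d (p - d) - f0 d (p - d)\<bar>)"
    by (simp add: d(3) algebra_simps)
  also have "\<dots> \<le> d * L_AA2 f0 f1 L0 L1"
    using L_AA2_upper[OF range0 range1, where \<Delta> = d and \<pi> = p] d assms by (intro mult_left_mono) auto
  finally show ?thesis by (simp add: d_def mult.commute)
qed

lemma AA2_gap:
  assumes range0: "\<And>x y. x \<in> {0..1} \<Longrightarrow> y \<in> {0..1} \<Longrightarrow> f0 x y \<in> {0..1}"
    and range1: "\<And>x y. x \<in> {0..1} \<Longrightarrow> y \<in> {0..1} \<Longrightarrow> f1 x y \<in> {0..1}"
    and lip0: "l1_lipschitz f0 L0" and lip1: "l1_lipschitz f1 L1"
    and "\<pi> \<in> {0..1}" "\<pi>' \<in> {0..1}"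
  shows "\<bar>fA_AA2 f0 f1 \<pi> \<pi>' - fB_AA2 f0 f1 \<pi> \<pi>'\<bar> \<le> L_AA2 f0 f1 L0 L1 * \<bar>\<pi> - \<pi>'\<bar>"
proof (cases "\<pi>' \<le> \<pi>")
  case True
  then show ?thesis
    using upd_AA2_gap[OF range0 range1 lip0 lip1, of \<pi>' \<pi>] assms
    by (cases "\<pi> = \<pi>'") (auto simp: fA_AA2_def fB_AA2_def AA2_update_def)
next
  case False
  then show ?thesis
    using upd_AA2_gap[OF range0 range1 lip0 lip1, of \<pi> \<pi>'] assms
    by (auto simp: fA_AA2_def fB_AA2_def AA2_update_def abs_minus_commute)
qed

theorem mainTheorem5:
  fixes f0 f1 :: "real \<Rightarrow> real \<Rightarrow> real" and L0 L1 :: real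
  assumes C1_0: "C1_on_square f0" and C1_1: "C1_on_square f1"
    and range0: "\<And>x y. x \<in> {0..1} \<Longrightarrow> y \<in> {0..1} \<Longrightarrow> f0 x y \<in> {0..1}"
    and range1: "\<And>x y. x \<in> {0..1} \<Longrightarrow> y \<in> {0..1} \<Longrightarrow> f1 x y \<in> {0..1}"
    and lip0: "l1_lipschitz f0 L0" and lip1: "l1_lipschitz f1 L1"
    and contr: "L_AA2 f0 f1 L0 L1 < 1"
  shows "(\<forall>\<pi> \<pi>'. \<pi> \<in> {0..1} \<longrightarrow> \<pi>' \<in> {0..1} \<longrightarrow>
            \<bar>fA_AA2 f0 f1 \<pi> \<pi>' - fB_AA2 f0 f1 \<pi> \<pi>'\<bar> \<le> L_AA2 f0 f1 L0 L1 * \<bar>\<pi> - \<pi>'\<bar>)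
       \<and> (\<forall>pA pB :: nat \<Rightarrow> real.
            pA 0 \<in> {0..1} \<longrightarrow> pB 0 \<in> {0..1} \<longrightarrow>
            (\<forall>t. pA (Suc t) = fA_AA2 f0 f1 (pA t) (pB t) \<and> pB (Suc t) = fB_AA2 f0 f1 (pA t) (pB t)) \<longrightarrow>
            (\<lambda>t. \<bar>pA t - pB t\<bar>) \<longlonglongrightarrow> 0)"
proof (intro conjI allI impI)
  show "\<bar>fA_AA2 f0 f1 \<pi> \<pi>' - fB_AA2 f0 f1 \<pi> \<pi>'\<bar> \<le> L_AA2 f0 f1 L0 L1 * \<bar>\<pi> - \<pi>'\<bar>"
    if "\<pi> \<in> {0..1}" "\<pi>' \<in> {0..1}" for \<pi> \<pi>'
    using AA2_gap[OF range0 range1 lip0 lip1 that] .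
next
  fix pA pB :: "nat \<Rightarrow> real"
  assume init: "pA 0 \<in> {0..1}" "pB 0 \<in> {0..1}"
    and dyn: "\<forall>t. pA (Suc t) = fA_AA2 f0 f1 (pA t) (pB t) \<and> pB (Suc t) = fB_AA2 f0 f1 (pA t) (pB t)"
  have unit: "pA t \<in> {0..1} \<and> pB t \<in> {0..1}" for t
    by (induction t) (use init dyn AA2_update_in_unit[OF range0 range1] in
                      \<open>auto simp: fA_AA2_def fB_AA2_def\<close>)
  show "(\<lambda>t. \<bar>pA t - pB t\<bar>) \<longlonglongrightarrow> 0"
    using dyn unit AA2_gap[OF range0 range1 lip0 lip1]
    by (intro nonneg_contraction_tendsto_zero[OF _ _ contr]) auto
qed

end
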